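(* Let $w=w_1\cdots w_n$ be a fixed word of length $n\ge 2$. If $w_i=w_{n-i+1}$ for all $1\le i\le n$, then $\lim_{d\to\infty}\frac{f(w,d)}{\frac12(n+2)^d}=1$; otherwise $\lim_{d\to\infty}\frac{f(w,d)}{\frac14(n+2)^d}=1$.
   Context: Let $[n]=\{1,\dots,n\}$, $n\ge 2$, $d\ge 1$. For $p\in[n]^d$ and $v\in\{-1,0,1\}^d$ with $v\ne\vec 0$, if $p+tv\in[n]^d$ for all $0\le t\le n-1$, the set $\ell=\{p,p+v,\dots,p+(n-1)v\}$ is called a line (with initial point $p$ and direction $v$). Each line has a unique representation $(p;v)$ in which the first nonzero coordinate of $v$ is $+1$ (its canonical pair); for such a representation write $\ell_i=p+(i-1)v$ for $1\le i\le n$. An $(n,d)$-grid is a function $G:[n]^d\to\Sigma$ for an arbitrary set of letters $\Sigma$. For a word $w=w_1\cdots w_n$, a line $\ell$ contains $w$ if $G(\ell_1)G(\ell_2)\cdots G(\ell_n)=w$ or $G(\ell_n)\cdots G(\ell_1)=w$. $f(w,G)$ is the number of lines of $[n]^d$ containing $w$, and $f(w,d)=\max_G f(w,G)$ over all $(n,d)$-grids $G$. *)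

theory Defs
  imports Complex_Main
begin

definition point_in :: "nat \<Rightarrow> nat \<Rightarrow> int list \<Rightarrow> bool" where
  "point_in n d p \<longleftrightarrow> length p = d \<and> (\<forall>x\<in>set p. 1 \<le> x \<and> x \<le> int n)"

definition direction :: "nat \<Rightarrow> int list \<Rightarrow> bool" where
  "direction d v \<longleftrightarrow> length v = d \<and> (\<forall>x\<in>set v. x \<in> {-1, 0, 1}) \<and> (\<exists>x\<in>set v. x \<noteq> 0)"

definition shift :: "int list \<Rightarrow> int list \<Rightarrow> int \<Rightarrow> int list" where
  "shift p v t = map2 (\<lambda>a b. a + t * b) p v"

definition line_pair :: "nat \<Rightarrow> nat \<Rightarrow> int list \<Rightarrow> int list \<Rightarrow> bool" where
  "line_pair n d p v \<longleftrightarrow> point_in n d p \<and> direction d v \<and>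
     (\<forall>t::nat. t \<le> n - 1 \<longrightarrow> point_in n d (shift p v (int t)))"

definition canonical_pair :: "nat \<Rightarrow> nat \<Rightarrow> int list \<Rightarrow> int list \<Rightarrow> bool" where
  "canonical_pair n d p v \<longleftrightarrow> line_pair n d p v \<and> hd (filter (\<lambda>x. x \<noteq> 0) v) = 1"

definition line_set :: "nat \<Rightarrow> int list \<Rightarrow> int list \<Rightarrow> int list set" where
  "line_set n p v = {shift p v (int t) | t. t \<le> n - 1}"

definition is_line :: "nat \<Rightarrow> nat \<Rightarrow> int list set \<Rightarrow> bool" where
  "is_line n d L \<longleftrightarrow> (\<exists>p v. line_pair n d p v \<and> L = line_set n p v)"

definition line_contains :: "nat \<Rightarrow> nat \<Rightarrow> (int list \<Rightarrow> 'a) \<Rightarrow> 'a list \<Rightarrow> int list set \<Rightarrow> bool" where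
  "line_contains n d G w L \<longleftrightarrow> (\<exists>p v. canonical_pair n d p v \<and> L = line_set n p v \<and>
     (let r = map (\<lambda>i. G (shift p v (int i))) [0..<n] in r = w \<or> rev r = w))"

definition f_grid :: "'a list \<Rightarrow> nat \<Rightarrow> (int list \<Rightarrow> 'a) \<Rightarrow> nat" where
  "f_grid w d G = card {L. is_line (length w) d L \<and> line_contains (length w) d G w L}"

definition f_word :: "'a list \<Rightarrow> nat \<Rightarrow> nat" where
  "f_word w d = Max (range (f_grid w d))"

end

theory Submission
  imports Defs "HOL-Library.List_Lexorder"
begin

text \<open>Code a line coordinatewise by its first value and its step. A coordinate is then one of
  n + 2 letters (n constant values, increasing from 1, decreasing from n), and a line is a word of
  length d with a moving letter, up to reversal; there are fewer than (n + 2)^d/2 lines. If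
  w_i \<noteq> w_(n+1-i), a line containing w is determined by its points x, y at positions i and
  n + 1 - i; they carry the different letters w_i and w_(n+1-i) and agree once the values i and
  n + 1 - i are masked, and by AM-GM at most a quarter of all mask-equivalent pairs of points
  join two given disjoint colour classes, so at most (n + 2)^d/4 lines contain w.

  For the lower bound, by Chebyshev almost every word is balanced: each letter and each pair of
  constant letters k, n + 1 - k occurs close to its expected number of times. On a balanced line
  the position of a point is determined, up to reversal, by the point alone: it is the least
  level k with many coordinates in {k, n + 1 - k}, and the two halves of the line are told apart
  by the parity of the number of coordinates below (n + 1)/2, provided the word has an odd number
  of moving letters. Colouring every point by the letter of its decoded position, every balanced
  line contains w if w is a palindrome, and every balanced line with an odd number of moving
  coordinates contains w in general; these are asymptotically (n + 2)^d/2 and (n + 2)^d/4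
  lines.\<close>

definition words :: "'b set \<Rightarrow> nat \<Rightarrow> 'b list set" where
  "words A d = {u. set u \<subseteq> A \<and> length u = d}"

definition occurrences :: "'b set \<Rightarrow> 'b list \<Rightarrow> nat" where
  "occurrences B u = length (filter (\<lambda>z. z \<in> B) u)"

definition deviation :: "'b set \<Rightarrow> 'b set \<Rightarrow> 'b list \<Rightarrow> int" where
  "deviation A B u = int (card A) * int (occurrences B u) - int (length u) * int (card B)"

lemma finite_words: "finite A \<Longrightarrow> finite (words A d)"
  unfolding words_def by (rule finite_lists_length_eq)

lemma card_words: "finite A \<Longrightarrow> card (words A d) = card A ^ d"
  unfolding words_def by (rule card_lists_length_eq)

lemma words_mono: "B \<subseteq> A \<Longrightarrow> words B d \<subseteq> words A d"
  unfolding words_def by auto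

lemma words_0: "words A 0 = {[]}"
  unfolding words_def by auto

lemma words_Suc: "words A (Suc d) = (\<lambda>(x, u). x # u) ` (A \<times> words A d)"
  by (auto simp: words_def length_Suc_conv image_iff)

lemma sum_words_Suc:
  assumes "finite A"
  shows "(\<Sum>u\<in>words A (Suc d). f u) = (\<Sum>x\<in>A. \<Sum>u\<in>words A d. f (x # u))"
proof -
  have "inj_on (\<lambda>(x, u). x # u) (A \<times> words A d)"
    by (auto simp: inj_on_def)
  then have "(\<Sum>u\<in>words A (Suc d). f u) = (\<Sum>(x, u)\<in>A \<times> words A d. f (x # u))"
    unfolding words_Suc by (simp add: sum.reindex case_prod_unfold)
  also have "\<dots> = (\<Sum>x\<in>A. \<Sum>u\<in>words A d. f (x # u))"
    by (rule sum.cartesian_product[symmetric])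
  finally show ?thesis .
qed

lemma sum_words_prod_list:
  fixes g :: "'b \<Rightarrow> 'c::comm_semiring_1"
  assumes "finite A"
  shows "(\<Sum>u\<in>words A d. prod_list (map g u)) = sum g A ^ d"
proof (induction d)
  case 0
  then show ?case by (simp add: words_0)
next
  case (Suc d)
  have "(\<Sum>u\<in>words A (Suc d). prod_list (map g u)) = (\<Sum>x\<in>A. g x * sum g A ^ d)"
    by (simp add: sum_words_Suc[OF assms] Suc.IH flip: sum_distrib_left)
  then show ?case by (simp add: sum_distrib_right)
qed

lemma card_words_not_subset:
  assumes "finite A" "C \<subseteq> A"
  shows "card {u \<in> words A d. \<not> set u \<subseteq> C} = card A ^ d - card C ^ d"
proof -
  have "{u \<in> words A d. \<not> set u \<subseteq> C} = words A d - words C d"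
    by (auto simp: words_def)
  moreover have "finite C" using assms finite_subset by blast
  ultimately show ?thesis
    using assms by (simp add: card_Diff_subset finite_words card_words words_mono)
qed

lemma occurrences_Nil [simp]: "occurrences B [] = 0"
  by (simp add: occurrences_def)

lemma occurrences_Cons [simp]:
  "occurrences B (z # u) = (if z \<in> B then Suc (occurrences B u) else occurrences B u)"
  by (simp add: occurrences_def)

lemma occurrences_Un: "A \<inter> B = {} \<Longrightarrow> occurrences (A \<union> B) u = occurrences A u + occurrences B u"
  by (induction u) auto

lemma prod_list_sign:
  "prod_list (map (\<lambda>z. if z \<in> B then -1 else 1) u) = (-1 :: 'c::ring_1) ^ occurrences B u"
  by (induction u) auto

lemma card_words_odd_occurrences:
  assumes "finite A" "B \<subseteq> A"
  shows "2 * int (card {u \<in> words A d. odd (occurrences B u)})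
    = int (card A) ^ d - (int (card A) - 2 * int (card B)) ^ d"
proof -
  have fin: "finite (words A d)" using assms(1) by (rule finite_words)
  have "card (A \<inter> - B) = card A - card B" "card B \<le> card A"
    using assms by (simp_all add: Diff_eq[symmetric] card_Diff_subset finite_subset card_mono)
  then have "(\<Sum>z\<in>A. if z \<in> B then -1 else 1) = int (card A) - 2 * int (card B)"
    using assms by (simp add: sum.If_cases Int_absorb1 of_nat_diff)
  then have "(\<Sum>u\<in>words A d. (-1 :: int) ^ occurrences B u) = (int (card A) - 2 * int (card B)) ^ d"
    using sum_words_prod_list[OF assms(1), of "\<lambda>z. if z \<in> B then -1 else (1::int)" d]
    by (simp add: prod_list_sign)
  moreover have "(\<Sum>u\<in>words A d. (-1 :: int) ^ occurrences B u)
      = int (card (words A d)) - 2 * int (card {u \<in> words A d. odd (occurrences B u)})"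
  proof -
    have "(-1 :: int) ^ occurrences B u = 1 - 2 * (if odd (occurrences B u) then 1 else 0)" for u
      by simp
    moreover have "(\<Sum>u\<in>words A d. if odd (occurrences B u) then 1 else 0)
        = int (card {u \<in> words A d. odd (occurrences B u)})"
      using fin by (simp flip: sum.inter_filter)
    ultimately show ?thesis
      by (simp add: sum_subtractf flip: sum_distrib_left)
  qed
  ultimately show ?thesis using card_words[OF assms(1)] by simp
qed

lemma sum_words_deviation_sq:
  assumes "finite A" "B \<subseteq> A"
  shows "(\<Sum>u\<in>words A d. (deviation A B u)^2)
    = int d * int (card B) * (int (card A) - int (card B)) * int (card A) ^ d"
proof (induction d)
  case 0
  then show ?case by (simp add: words_0 deviation_def)
next
  case (Suc d)
  define m where "m = int (card A)"
  define b where "b = int (card B)"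
  define e where "e x = (if x \<in> B then m - b else - b)" for x
  have "card B \<le> card A" "card (A - B) = card A - card B"
    using assms by (simp_all add: card_mono card_Diff_subset finite_subset)
  moreover have "A \<inter> B = B" "A \<inter> - B = A - B" using assms by auto
  ultimately have sum_e: "(\<Sum>x\<in>A. e x) = 0"
    and sum_if: "(\<Sum>x\<in>A. if x \<in> B then (m - b)^2 else b^2) = b * (m - b)^2 + (m - b) * b^2"
    using assms(1) unfolding e_def m_def b_def by (simp_all add: sum.If_cases of_nat_diff algebra_simps)
  have "(\<Sum>x\<in>A. (e x)^2) = (\<Sum>x\<in>A. if x \<in> B then (m - b)^2 else b^2)"
    by (rule sum.cong) (auto simp: e_def)
  then have sum_e_sq: "(\<Sum>x\<in>A. (e x)^2) = m * b * (m - b)"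
    unfolding sum_if by (simp add: power2_eq_square algebra_simps)
  have dev_Cons: "deviation A B (x # u) = deviation A B u + e x" for x u
    unfolding deviation_def e_def m_def b_def by (simp add: algebra_simps)
  have "(\<Sum>u\<in>words A (Suc d). (deviation A B u)^2)
      = (\<Sum>x\<in>A. \<Sum>u\<in>words A d. (deviation A B u)^2 + 2 * e x * deviation A B u + (e x)^2)"
    by (simp add: sum_words_Suc[OF assms(1)] dev_Cons power2_eq_square algebra_simps)
  also have "\<dots> = m * (\<Sum>u\<in>words A d. (deviation A B u)^2)
      + 2 * (\<Sum>x\<in>A. e x) * (\<Sum>u\<in>words A d. deviation A B u) + (\<Sum>x\<in>A. (e x)^2) * card (words A d)"
    by (simp add: sum.distrib sum_distrib_left sum_distrib_right m_def algebra_simps)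
  also have "\<dots> = m * (int d * b * (m - b) * m ^ d) + m * b * (m - b) * m ^ d"
    using Suc.IH sum_e sum_e_sq card_words[OF assms(1), of d] unfolding m_def b_def by simp
  also have "\<dots> = int (Suc d) * b * (m - b) * m ^ Suc d"
    by (simp add: algebra_simps)
  finally show ?case unfolding m_def b_def .
qed

lemma card_words_deviating_le:
  assumes "finite A" "B \<subseteq> A"
  shows "card {u \<in> words A d. int d \<le> 8 * \<bar>deviation A B u\<bar>} * d \<le> 64 * card A ^ (d + 2)"
proof (cases "d = 0")
  case False
  define m where "m = int (card A)"
  define Bad where "Bad = {u \<in> words A d. int d \<le> 8 * \<bar>deviation A B u\<bar>}"
  have fin: "finite (words A d)" using assms(1) by (rule finite_words)
  have "card B \<le> card A" using assms by (simp add: card_mono)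
  then have "int (card B) * (m - int (card B)) \<le> m * m"
    unfolding m_def by (intro mult_mono) auto
  then have "int d * (int (card B) * (m - int (card B))) * m ^ d \<le> int d * (m * m) * m ^ d"
    unfolding m_def by (intro mult_left_mono mult_right_mono) auto
  then have var_le: "int d * int (card B) * (m - int (card B)) * m ^ d \<le> int d * m ^ 2 * m ^ d"
    by (simp add: power2_eq_square algebra_simps)
  have "int (card Bad) * (int d)^2 = (\<Sum>u\<in>Bad. (int d)^2)" by simp
  also have "\<dots> \<le> (\<Sum>u\<in>Bad. 64 * (deviation A B u)^2)"
  proof (rule sum_mono)
    fix u assume "u \<in> Bad"
    then have "(int d)^2 \<le> (8 * \<bar>deviation A B u\<bar>)^2"
      unfolding Bad_def by (intro power_mono) auto
    then show "(int d)^2 \<le> 64 * (deviation A B u)^2" by (simp add: power_mult_distrib)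
  qed
  also have "\<dots> \<le> 64 * (\<Sum>u\<in>words A d. (deviation A B u)^2)"
    using fin by (simp add: sum_distrib_left Bad_def sum_mono2)
  also have "\<dots> \<le> 64 * (int d * m ^ 2 * m ^ d)"
    using var_le sum_words_deviation_sq[OF assms, of d] unfolding m_def by simp
  finally have "int (card Bad) * int d * int d \<le> 64 * m ^ (d + 2) * int d"
    by (simp add: power2_eq_square power_add algebra_simps)
  then have "int (card Bad * d) \<le> int (64 * card A ^ (d + 2))"
    using False unfolding m_def by simp
  then show ?thesis unfolding Bad_def by linarith
qed simp

text \<open>A line (p; v) is coded by the word zip p v, whose letters are the pairs (first value, step)
  of its coordinates.\<close>

definition coord_alphabet :: "nat \<Rightarrow> (int \<times> int) set" where
  "coord_alphabet n = (\<lambda>c. (c, 0)) ` {1..int n} \<union> {(1, 1), (int n, -1)}"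

definition point_at :: "(int \<times> int) list \<Rightarrow> int \<Rightarrow> int list" where
  "point_at u t = map (\<lambda>(a, b). a + t * b) u"

definition code_line :: "nat \<Rightarrow> (int \<times> int) list \<Rightarrow> int list set" where
  "code_line n u = (\<lambda>t. point_at u (int t)) ` {..n - 1}"

definition is_moving :: "(int \<times> int) list \<Rightarrow> bool" where
  "is_moving u \<longleftrightarrow> (\<exists>z\<in>set u. snd z \<noteq> 0)"

definition is_canonical :: "(int \<times> int) list \<Rightarrow> bool" where
  "is_canonical u \<longleftrightarrow> hd (filter (\<lambda>s. s \<noteq> 0) (map snd u)) = 1"

definition canonical_codes :: "nat \<Rightarrow> nat \<Rightarrow> (int \<times> int) list set" where
  "canonical_codes n d = {u \<in> words (coord_alphabet n) d. is_moving u \<and> is_canonical u}"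

definition reads :: "(int list \<Rightarrow> 'a) \<Rightarrow> 'a list \<Rightarrow> (int \<times> int) list \<Rightarrow> bool" where
  "reads G w u \<longleftrightarrow> (let r = map (\<lambda>i. G (point_at u (int i))) [0..<length w] in r = w \<or> rev r = w)"

lemma coord_alphabetE:
  assumes "z \<in> coord_alphabet n"
  obtains c where "z = (c, 0)" "1 \<le> c" "c \<le> int n" | "z = (1, 1)" | "z = (int n, -1)"
  using assms unfolding coord_alphabet_def by auto

lemma finite_coord_alphabet: "finite (coord_alphabet n)"
  unfolding coord_alphabet_def by auto

lemma card_coord_alphabet:
  assumes "n \<ge> 2"
  shows "card (coord_alphabet n) = n + 2"
proof -
  have "card ((\<lambda>c. (c, 0::int)) ` {1..int n}) = n"
    by (subst card_image) (auto simp: inj_on_def)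
  moreover have "card {(1::int, 1::int), (int n, -1)} = 2" using assms by auto
  ultimately show ?thesis
    unfolding coord_alphabet_def by (subst card_Un_disjoint) auto
qed

lemma length_point_at [simp]: "length (point_at u t) = length u"
  by (simp add: point_at_def)

lemma point_at_Cons [simp]: "point_at (z # u) t = (fst z + t * snd z) # point_at u t"
  by (cases z) (simp add: point_at_def)

lemma nth_point_at: "j < length u \<Longrightarrow> point_at u t ! j = fst (u ! j) + t * snd (u ! j)"
  by (simp add: point_at_def case_prod_unfold)

lemma shift_eq_point_at: "shift (map fst u) (map snd u) t = point_at u t"
  unfolding shift_def point_at_def by (simp add: zip_map_fst_snd)

lemma line_set_eq_code_line: "line_set n (map fst u) (map snd u) = code_line n u"
  unfolding line_set_def code_line_def shift_eq_point_at by auto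

lemma coord_alphabet_range:
  assumes "z \<in> coord_alphabet n" "t \<le> n - 1" "n \<ge> 1"
  shows "1 \<le> fst z + int t * snd z" "fst z + int t * snd z \<le> int n"
  using assms by (auto elim!: coord_alphabetE simp: of_nat_diff)

lemma snd_coord_alphabet: "z \<in> coord_alphabet n \<Longrightarrow> snd z \<in> {-1, 0, 1}"
  by (auto elim!: coord_alphabetE)

lemma point_in_point_at:
  assumes "u \<in> words (coord_alphabet n) d" "t \<le> n - 1" "n \<ge> 1"
  shows "point_in n d (point_at u (int t))"
  using assms coord_alphabet_range[OF _ assms(2,3)]
  unfolding point_in_def point_at_def words_def by auto

lemma line_pair_code:
  assumes "u \<in> words (coord_alphabet n) d" "is_moving u" "n \<ge> 1"
  shows "line_pair n d (map fst u) (map snd u)"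
proof -
  have "point_in n d (map fst u)"
    using point_in_point_at[OF assms(1) _ assms(3), of 0] by (simp add: point_at_def case_prod_unfold)
  moreover have "direction d (map snd u)"
    using assms snd_coord_alphabet unfolding direction_def is_moving_def words_def by auto
  ultimately show ?thesis
    unfolding line_pair_def shift_eq_point_at using point_in_point_at[OF assms(1) _ assms(3)] by auto
qed

lemma line_pairE:
  assumes "line_pair n d p v"
  obtains u where "u \<in> words (coord_alphabet n) d" "is_moving u" "p = map fst u" "v = map snd u"
proof
  have len: "length p = d" "length v = d"
    using assms unfolding line_pair_def point_in_def direction_def by auto
  show "p = map fst (zip p v)" "v = map snd (zip p v)" using len by auto
  have "(a, b) \<in> coord_alphabet n" if ab: "(a, b) \<in> set (zip p v)" for a b
  proof -
    have "a \<in> set p" "b \<in> set v" using ab by (auto dest: set_zip_leftD set_zip_rightD)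
    then have "1 \<le> a" "a \<le> int n" "b \<in> {-1, 0, 1}"
      using assms unfolding line_pair_def point_in_def direction_def by auto
    moreover have "a + int (n - 1) * b \<in> set (shift p v (int (n - 1)))"
      unfolding shift_def using ab by force
    then have "1 \<le> a + int (n - 1) * b" "a + int (n - 1) * b \<le> int n"
      using assms unfolding line_pair_def point_in_def by auto
    ultimately show ?thesis
      unfolding coord_alphabet_def by (cases "n = 0") (auto simp: of_nat_diff)
  qed
  then show "zip p v \<in> words (coord_alphabet n) d"
    unfolding words_def using len by auto
  obtain j where "j < length v" "v ! j \<noteq> 0"
    using assms unfolding line_pair_def direction_def by (auto simp: in_set_conv_nth)
  then show "is_moving (zip p v)"
    unfolding is_moving_def using len by (auto simp: in_set_zip intro!: bexI[of _ "(p ! j, v ! j)"])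
qed

lemma point_at_strict_mono:
  assumes "is_canonical u" "is_moving u" "t1 < t2"
  shows "point_at u t1 < point_at u t2"
  using assms(1,2)
proof (induction u)
  case Nil
  then show ?case by (simp add: is_moving_def)
next
  case (Cons z u)
  show ?case
  proof (cases "snd z = 0")
    case True
    then have "is_canonical u" "is_moving u"
      using Cons.prems unfolding is_canonical_def is_moving_def by auto
    then show ?thesis using Cons.IH True by simp
  next
    case False
    then have "snd z = 1" using Cons.prems(1) unfolding is_canonical_def by simp
    then show ?thesis using assms(3) by simp
  qed
qed

lemma code_line_Min_Max:
  assumes "is_canonical u" "is_moving u"
  shows "Min (code_line n u) = point_at u 0" "Max (code_line n u) = point_at u (int (n - 1))"
proof -
  have mono: "point_at u (int s) \<le> point_at u (int t)" if "s \<le> t" for s t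
    using point_at_strict_mono[OF assms, of "int s" "int t"] that by (cases "s = t") auto
  have "finite (code_line n u)" "point_at u 0 \<in> code_line n u" "point_at u (int (n - 1)) \<in> code_line n u"
    unfolding code_line_def by force+
  moreover have "point_at u 0 \<le> x" "x \<le> point_at u (int (n - 1))" if "x \<in> code_line n u" for x
    using that mono[of 0] mono[of _ "n - 1"] unfolding code_line_def by auto
  ultimately show "Min (code_line n u) = point_at u 0" "Max (code_line n u) = point_at u (int (n - 1))"
    by (auto intro: Min_eqI Max_eqI)
qed

text \<open>A canonical code runs through its line in increasing lexicographic order, so its
  first and last points are the least and greatest points of the line; these two points
  determine every coordinate.\<close>

lemma inj_on_code_line:
  assumes "n \<ge> 2"
  shows "inj_on (code_line n) (canonical_codes n d)"
proof (rule inj_onI)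
  fix u u' assume u: "u \<in> canonical_codes n d" and u': "u' \<in> canonical_codes n d"
    and eq: "code_line n u = code_line n u'"
  have first: "point_at u 0 = point_at u' 0"
    and last: "point_at u (int (n - 1)) = point_at u' (int (n - 1))"
    using code_line_Min_Max[of u n] code_line_Min_Max[of u' n] u u' eq
    unfolding canonical_codes_def by auto
  have len: "length u = length u'" using u u' unfolding canonical_codes_def words_def by simp
  show "u = u'"
  proof (rule nth_equalityI[OF len])
    fix j assume j: "j < length u"
    have "fst (u ! j) = fst (u' ! j)"
      using arg_cong[OF first, of "\<lambda>x. x ! j"] j len by (simp add: nth_point_at)
    moreover have "snd (u ! j) = snd (u' ! j)"
      using arg_cong[OF last, of "\<lambda>x. x ! j"] j len assms calculation by (simp add: nth_point_at)
    ultimately show "u ! j = u' ! j" by (simp add: prod_eq_iff)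
  qed
qed

lemma contained_lines_eq:
  assumes "length w \<ge> 1"
  shows "{L. is_line (length w) d L \<and> line_contains (length w) d G w L}
    = code_line (length w) ` {u \<in> canonical_codes (length w) d. reads G w u}"
    (is "?lines = ?codes")
proof
  show "?lines \<subseteq> ?codes"
  proof
    fix L assume "L \<in> ?lines"
    then obtain p v where cp: "canonical_pair (length w) d p v" and L: "L = line_set (length w) p v"
      and read: "let r = map (\<lambda>i. G (shift p v (int i))) [0..<length w] in r = w \<or> rev r = w"
      unfolding line_contains_def by blast
    from cp obtain u where u: "u \<in> words (coord_alphabet (length w)) d" "is_moving u"
      and p: "p = map fst u" and v: "v = map snd u"
      unfolding canonical_pair_def by (auto elim: line_pairE)
    have "u \<in> canonical_codes (length w) d"
      using u cp unfolding canonical_codes_def canonical_pair_def is_canonical_def v by simp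
    moreover have "reads G w u"
      using read unfolding reads_def p v shift_eq_point_at .
    moreover have "L = code_line (length w) u"
      unfolding L p v line_set_eq_code_line ..
    ultimately show "L \<in> ?codes" by blast
  qed
  show "?codes \<subseteq> ?lines"
  proof
    fix L assume "L \<in> ?codes"
    then obtain u where u: "u \<in> canonical_codes (length w) d" and read: "reads G w u"
      and L: "L = code_line (length w) u"
      by blast
    then have cp: "canonical_pair (length w) d (map fst u) (map snd u)"
      using line_pair_code[of u "length w" d] assms
      unfolding canonical_pair_def canonical_codes_def is_canonical_def by simp
    then have "is_line (length w) d L"
      unfolding is_line_def canonical_pair_def L line_set_eq_code_line[symmetric] by blast
    moreover have "line_contains (length w) d G w L"
      unfolding line_contains_def L line_set_eq_code_line[symmetric]
      using cp read unfolding reads_def shift_eq_point_at[symmetric] by blast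
    ultimately show "L \<in> ?lines" by blast
  qed
qed

lemma f_grid_eq_card_codes:
  assumes "length w \<ge> 2"
  shows "f_grid w d G = card {u \<in> canonical_codes (length w) d. reads G w u}"
proof -
  have "inj_on (code_line (length w)) {u \<in> canonical_codes (length w) d. reads G w u}"
    using inj_on_code_line[OF assms] by (rule inj_on_subset) blast
  then show ?thesis
    using assms unfolding f_grid_def by (simp add: contained_lines_eq card_image)
qed

lemma f_grid_le:
  assumes "length w \<ge> 2"
  shows "f_grid w d G \<le> (length w + 2) ^ d"
proof -
  have "{u \<in> canonical_codes (length w) d. reads G w u} \<subseteq> words (coord_alphabet (length w)) d"
    unfolding canonical_codes_def by auto
  then have "f_grid w d G \<le> card (words (coord_alphabet (length w)) d)"
    unfolding f_grid_eq_card_codes[OF assms] by (intro card_mono finite_words finite_coord_alphabet)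
  then show ?thesis using card_words[OF finite_coord_alphabet] card_coord_alphabet[OF assms] by simp
qed

lemma finite_range_f_grid:
  assumes "length w \<ge> 2"
  shows "finite (range (f_grid w d))"
  by (rule finite_subset[of _ "{..(length w + 2) ^ d}"]) (use f_grid_le[OF assms] in auto)

lemma f_grid_le_f_word: "length w \<ge> 2 \<Longrightarrow> f_grid w d G \<le> f_word w d"
  unfolding f_word_def by (intro Max_ge finite_range_f_grid) auto

lemma f_word_attained:
  assumes "length w \<ge> 2"
  obtains G where "f_word w d = f_grid w d G"
  using Max_in[OF finite_range_f_grid[OF assms]] unfolding f_word_def by auto

definition reverse_coord :: "nat \<Rightarrow> int \<times> int \<Rightarrow> int \<times> int" where
  "reverse_coord n z = (if snd z = 0 then fst z else int n + 1 - fst z, - snd z)"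

lemma reverse_coord_reverse_coord [simp]: "reverse_coord n (reverse_coord n z) = z"
  by (cases z) (simp add: reverse_coord_def)

lemma map_reverse_coord_words:
  "u \<in> words (coord_alphabet n) d \<Longrightarrow> map (reverse_coord n) u \<in> words (coord_alphabet n) d"
  unfolding words_def coord_alphabet_def reverse_coord_def by auto

lemma is_moving_map_reverse_coord [simp]: "is_moving (map (reverse_coord n) u) = is_moving u"
  unfolding is_moving_def reverse_coord_def by auto

lemma occurrences_map_reverse_coord:
  "occurrences B (map (reverse_coord n) u) = occurrences (reverse_coord n ` B) u"
proof -
  have "reverse_coord n z \<in> B \<longleftrightarrow> z \<in> reverse_coord n ` B" for z
    by (metis image_iff reverse_coord_reverse_coord)
  then show ?thesis unfolding occurrences_def by (simp add: filter_map comp_def)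
qed

lemma is_canonical_map_reverse_coord:
  assumes "u \<in> words (coord_alphabet n) d" "is_moving u"
  shows "is_canonical (map (reverse_coord n) u) \<longleftrightarrow> \<not> is_canonical u"
proof -
  define steps where "steps = filter (\<lambda>s. s \<noteq> 0) (map snd u)"
  have "steps \<noteq> []" using assms(2) unfolding steps_def is_moving_def by (auto simp: filter_empty_conv)
  moreover have "set steps \<subseteq> {-1, 1}"
    using assms(1) unfolding steps_def words_def coord_alphabet_def by auto
  moreover have "filter (\<lambda>s. s \<noteq> 0) (map snd (map (reverse_coord n) u)) = map uminus steps"
    unfolding steps_def reverse_coord_def by (induction u) auto
  ultimately show ?thesis
    unfolding is_canonical_def steps_def[symmetric] by (cases steps) auto
qed

text \<open>Reversal pairs each canonical code with a non-canonical code of the same line.\<close>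

lemma two_card_canonical:
  assumes "U \<subseteq> words (coord_alphabet n) d" "\<And>u. u \<in> U \<Longrightarrow> map (reverse_coord n) u \<in> U"
    and "\<And>u. u \<in> U \<Longrightarrow> is_moving u"
  shows "2 * card {u \<in> U. is_canonical u} = card U"
proof -
  let ?rev = "map (reverse_coord n)"
  have fin: "finite U"
    using assms(1) finite_words[OF finite_coord_alphabet] by (rule finite_subset)
  have inv: "?rev (?rev u) = u" for u
    by (simp add: comp_def)
  have rev_iff: "is_canonical (?rev u) \<longleftrightarrow> \<not> is_canonical u" if "u \<in> U" for u
    using that assms(1,3) is_canonical_map_reverse_coord by blast
  have inj: "inj_on ?rev {u \<in> U. is_canonical u}"
    by (rule inj_onI) (metis inv)
  have image: "?rev ` {u \<in> U. is_canonical u} = {u \<in> U. \<not> is_canonical u}"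
  proof (intro set_eqI iffI)
    fix x assume "x \<in> ?rev ` {u \<in> U. is_canonical u}"
    then obtain u where "u \<in> U" "is_canonical u" "x = ?rev u" by blast
    then show "x \<in> {u \<in> U. \<not> is_canonical u}" using assms(2)[of u] rev_iff[of u] by simp
  next
    fix x assume x: "x \<in> {u \<in> U. \<not> is_canonical u}"
    then have "?rev x \<in> {u \<in> U. is_canonical u}"
      using assms(2)[of x] rev_iff[of x] by simp
    then show "x \<in> ?rev ` {u \<in> U. is_canonical u}"
      using inv[of x] by (metis image_eqI)
  qed
  have "card {u \<in> U. \<not> is_canonical u} = card {u \<in> U. is_canonical u}"
    using card_image[OF inj] unfolding image .
  moreover have "card U = card ({u \<in> U. is_canonical u} \<union> {u \<in> U. \<not> is_canonical u})"
    by (rule arg_cong[where f = card]) blast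
  moreover have "\<dots> = card {u \<in> U. is_canonical u} + card {u \<in> U. \<not> is_canonical u}"
    using fin by (intro card_Un_disjoint) auto
  ultimately show ?thesis by simp
qed

lemma two_card_canonical_codes_le:
  assumes "n \<ge> 2"
  shows "2 * card (canonical_codes n d) \<le> (n + 2) ^ d"
proof -
  let ?U = "{u \<in> words (coord_alphabet n) d. is_moving u}"
  have "canonical_codes n d = {u \<in> ?U. is_canonical u}"
    unfolding canonical_codes_def by auto
  moreover have "2 * card {u \<in> ?U. is_canonical u} = card ?U"
    by (rule two_card_canonical) (auto simp: map_reverse_coord_words)
  moreover have "card ?U \<le> card (words (coord_alphabet n) d)"
    by (intro card_mono finite_words finite_coord_alphabet) auto
  ultimately show ?thesis
    using card_words[OF finite_coord_alphabet] card_coord_alphabet[OF assms] by simp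
qed

definition level_mask :: "nat \<Rightarrow> int \<Rightarrow> int \<Rightarrow> int" where
  "level_mask n \<alpha> c = (if c = \<alpha> \<or> c = int n + 1 - \<alpha> then 0 else c)"

definition pair_mask :: "nat \<Rightarrow> int \<Rightarrow> int list \<Rightarrow> int list" where
  "pair_mask n \<alpha> x = map (level_mask n \<alpha>) x"

text \<open>The line on which x sits at position \<alpha> and y at position n + 1 - \<alpha>: coordinates
  where x and y agree are constant, the others increase from 1 if x has value \<alpha> there and
  decrease from n otherwise.\<close>

definition line_through :: "nat \<Rightarrow> int \<Rightarrow> int list \<Rightarrow> int list \<Rightarrow> int list set" where
  "line_through n \<alpha> x y =
    (\<lambda>t. map2 (\<lambda>a b. if a = b then a else if a = \<alpha> then 1 + int t else int n - int t) x y)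
      ` {..n - 1}"

lemma coord_through_positions:
  assumes "z \<in> coord_alphabet n" "i < n" "2 * i \<noteq> n - 1" "t \<le> n - 1"
  defines "a \<equiv> fst z + int i * snd z" and "b \<equiv> fst z + int (n - 1 - i) * snd z"
  shows "(if a = b then a else if a = int i + 1 then 1 + int t else int n - int t) = fst z + int t * snd z"
    and "(if b = a then b else if b = int i + 1 then 1 + int t else int n - int t)
      = fst z + int (n - 1 - t) * snd z"
    and "level_mask n (int i + 1) a = level_mask n (int i + 1) b"
  using assms(1-4) unfolding a_def b_def level_mask_def by (auto elim!: coord_alphabetE simp: of_nat_diff)

lemma image_reflect_atMost: "(\<lambda>t. m - t) ` {..m} = {..m :: nat}"
proof
  show "{..m} \<subseteq> (\<lambda>t. m - t) ` {..m}"
  proof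
    fix t assume "t \<in> {..m}"
    then show "t \<in> (\<lambda>t. m - t) ` {..m}" by (intro image_eqI[of t _ "m - t"]) auto
  qed
qed auto

lemma code_line_eq_line_through:
  assumes "set u \<subseteq> coord_alphabet n" "i < n" "2 * i \<noteq> n - 1"
  shows "code_line n u = line_through n (int i + 1) (point_at u (int i)) (point_at u (int (n - 1 - i)))"
    and "code_line n u = line_through n (int i + 1) (point_at u (int (n - 1 - i))) (point_at u (int i))"
    and "pair_mask n (int i + 1) (point_at u (int i))
      = pair_mask n (int i + 1) (point_at u (int (n - 1 - i)))"
proof -
  note through = coord_through_positions[OF subsetD[OF assms(1)] assms(2,3)]
  let ?f = "\<lambda>x y t. map2 (\<lambda>a b. if a = b then a else if a = int i + 1 then 1 + int t else int n - int t) x y"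
  have fwd: "?f (point_at u (int i)) (point_at u (int (n - 1 - i))) t = point_at u (int t)"
    if "t \<le> n - 1" for t
    unfolding point_at_def map2_map_map
    by (rule map_cong[OF refl]) (simp only: case_prod_unfold through(1)[OF _ that])
  have bwd: "?f (point_at u (int (n - 1 - i))) (point_at u (int i)) t = point_at u (int (n - 1 - t))"
    if "t \<le> n - 1" for t
    unfolding point_at_def map2_map_map
    by (rule map_cong[OF refl]) (simp only: case_prod_unfold through(2)[OF _ that])
  show "code_line n u = line_through n (int i + 1) (point_at u (int i)) (point_at u (int (n - 1 - i)))"
    unfolding line_through_def code_line_def using fwd by (intro image_cong) auto
  have "line_through n (int i + 1) (point_at u (int (n - 1 - i))) (point_at u (int i))
      = (\<lambda>t. point_at u (int t)) ` (\<lambda>t. n - 1 - t) ` {..n - 1}"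
    unfolding line_through_def image_image using bwd by (intro image_cong) auto
  then show "code_line n u = line_through n (int i + 1) (point_at u (int (n - 1 - i))) (point_at u (int i))"
    unfolding code_line_def image_reflect_atMost by simp
  show "pair_mask n (int i + 1) (point_at u (int i))
      = pair_mask n (int i + 1) (point_at u (int (n - 1 - i)))"
    unfolding pair_mask_def point_at_def map_map
    by (rule map_cong[OF refl]) (simp only: case_prod_unfold comp_apply through(3)[of _ 0])
qed

lemma card_zip_pairs_le:
  assumes "finite R"
  shows "finite {(x, y). length x = d \<and> length y = d \<and> set (zip x y) \<subseteq> R}" (is "finite ?P")
    and "card {(x, y). length x = d \<and> length y = d \<and> set (zip x y) \<subseteq> R} \<le> card R ^ d"
proof -
  have sub: "?P \<subseteq> (\<lambda>zs. (map fst zs, map snd zs)) ` words R d"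
  proof
    fix q assume "q \<in> ?P"
    then obtain x y where "q = (x, y)" "length x = d" "length y = d" "set (zip x y) \<subseteq> R" by blast
    then show "q \<in> (\<lambda>zs. (map fst zs, map snd zs)) ` words R d"
      unfolding words_def by (intro image_eqI[of _ _ "zip x y"]) auto
  qed
  show "finite ?P"
    using finite_words[OF assms] sub by (rule finite_surj)
  have "card ?P \<le> card (words R d)"
    using finite_words[OF assms] sub by (rule surj_card_le)
  then show "card ?P \<le> card R ^ d"
    unfolding card_words[OF assms] .
qed

lemma card_level_mask_pairs_le:
  assumes "1 \<le> \<alpha>" "\<alpha> \<le> int n" "\<alpha> \<noteq> int n + 1 - \<alpha>"
  shows "card {(a, b). a \<in> {1..int n} \<and> b \<in> {1..int n} \<and> level_mask n \<alpha> a = level_mask n \<alpha> b} \<le> n + 2"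
    (is "card ?R \<le> _")
proof -
  define \<beta> where "\<beta> = int n + 1 - \<alpha>"
  have \<beta>: "1 \<le> \<beta>" "\<beta> \<le> int n" "\<alpha> \<noteq> \<beta>" using assms unfolding \<beta>_def by auto
  have mask: "level_mask n \<alpha> c = (if c \<in> {\<alpha>, \<beta>} then 0 else c)" for c
    unfolding level_mask_def \<beta>_def by simp
  let ?D = "(\<lambda>a. (a, a)) ` ({1..int n} - {\<alpha>, \<beta>})" and ?Q = "{\<alpha>, \<beta>} \<times> {\<alpha>, \<beta>}"
  have "?R \<subseteq> ?D \<union> ?Q"
  proof
    fix q assume "q \<in> ?R"
    then obtain a b where q: "q = (a, b)" and ab: "a \<in> {1..int n}" "b \<in> {1..int n}"
      and eq: "(if a \<in> {\<alpha>, \<beta>} then 0 else a) = (if b \<in> {\<alpha>, \<beta>} then 0 else b)"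
      unfolding mask by auto
    show "q \<in> ?D \<union> ?Q"
    proof (cases "a \<in> {\<alpha>, \<beta>}")
      case True
      then have "b \<in> {\<alpha>, \<beta>}" using ab(2) eq by (cases "b \<in> {\<alpha>, \<beta>}") auto
      then show ?thesis using True q by blast
    next
      case False
      then have "b = a" using ab eq by (cases "b \<in> {\<alpha>, \<beta>}") auto
      then show ?thesis using False ab(1) q by blast
    qed
  qed
  then have "card ?R \<le> card (?D \<union> ?Q)" by (intro card_mono) simp_all
  also have "\<dots> \<le> card ?D + card ?Q" by (rule card_Un_le)
  also have "\<dots> \<le> card ({1..int n} - {\<alpha>, \<beta>}) + 4"
    using card_image_le[of "{1..int n} - {\<alpha>, \<beta>}" "\<lambda>a. (a, a)"] \<beta>
    by (simp add: card_cartesian_product)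
  also have "card ({1..int n} - {\<alpha>, \<beta>}) = n - 2"
    using assms \<beta> by (subst card_Diff_subset) auto
  moreover have "n \<ge> 2" using assms \<beta> by linarith
  ultimately show ?thesis by linarith
qed

lemma card_mask_pairs_le:
  assumes "1 \<le> \<alpha>" "\<alpha> \<le> int n" "\<alpha> \<noteq> int n + 1 - \<alpha>"
  shows "finite {(x, y). point_in n d x \<and> point_in n d y \<and> pair_mask n \<alpha> x = pair_mask n \<alpha> y}"
    (is "finite ?M")
    and "card {(x, y). point_in n d x \<and> point_in n d y \<and> pair_mask n \<alpha> x = pair_mask n \<alpha> y}
      \<le> (n + 2) ^ d"
proof -
  define R where "R = {(a, b). a \<in> {1..int n} \<and> b \<in> {1..int n} \<and> level_mask n \<alpha> a = level_mask n \<alpha> b}"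
  have fin_R: "finite R" unfolding R_def by (rule finite_subset[of _ "{1..int n} \<times> {1..int n}"]) auto
  have sub: "?M \<subseteq> {(x, y). length x = d \<and> length y = d \<and> set (zip x y) \<subseteq> R}"
  proof safe
    fix x y assume x: "point_in n d x" and y: "point_in n d y" and eq: "pair_mask n \<alpha> x = pair_mask n \<alpha> y"
    show len: "length x = d" "length y = d" using x y unfolding point_in_def by auto
    fix a b assume "(a, b) \<in> set (zip x y)"
    then obtain j where j: "j < d" "a = x ! j" "b = y ! j" using len by (auto simp: in_set_zip)
    have "level_mask n \<alpha> a = level_mask n \<alpha> b"
      using arg_cong[OF eq, of "\<lambda>z. z ! j"] j len unfolding pair_mask_def by simp
    moreover have "a \<in> {1..int n}" "b \<in> {1..int n}"
      using x y j len nth_mem unfolding point_in_def by fastforce+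
    ultimately show "(a, b) \<in> R" unfolding R_def by simp
  qed
  note zip_pairs = card_zip_pairs_le[OF fin_R, of d]
  show "finite ?M" using zip_pairs(1) sub by (rule finite_subset[rotated])
  have "card ?M \<le> card R ^ d" using zip_pairs sub by (meson card_mono order.trans)
  also have "\<dots> \<le> (n + 2) ^ d"
    using card_level_mask_pairs_le[OF assms, folded R_def] by (rule power_mono) simp
  finally show "card ?M \<le> (n + 2) ^ d" .
qed

text \<open>Within one fibre K of the kernel, the pairs in (K \<inter> X) \<times> (K \<inter> Y) number at most
  |K|^2 / 4 by AM-GM.\<close>

lemma card_kernel_pairs_between_le:
  assumes "finite S" "X \<inter> Y = {}"
  shows "4 * card {(x, y). x \<in> S \<and> y \<in> S \<and> k x = k y \<and> x \<in> X \<and> y \<in> Y}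
    \<le> card {(x, y). x \<in> S \<and> y \<in> S \<and> k x = k y}"
proof -
  define K where "K c = {x \<in> S. k x = c}" for c
  have fin: "finite (K c)" for c unfolding K_def using assms(1) by auto
  have fibre: "4 * card ((K c \<inter> X) \<times> (K c \<inter> Y)) \<le> card (K c \<times> K c)" for c
  proof -
    define a where "a = card (K c \<inter> X)"
    define b where "b = card (K c \<inter> Y)"
    have "a + b = card ((K c \<inter> X) \<union> (K c \<inter> Y))"
      unfolding a_def b_def using fin assms(2) by (intro card_Un_disjoint[symmetric]) auto
    also have "\<dots> \<le> card (K c)" using fin by (intro card_mono) auto
    finally have "(a + b) * (a + b) \<le> card (K c) * card (K c)" by (intro mult_mono) auto
    moreover have "4 * (a * b) \<le> (a + b) * (a + b)"
    proof -
      have "4 * (int a * int b) \<le> (int a + int b) * (int a + int b)"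
        using zero_le_power2[of "int a - int b"] by (simp add: power2_eq_square algebra_simps)
      then show ?thesis by (metis of_nat_add of_nat_le_iff of_nat_mult of_nat_numeral)
    qed
    ultimately show ?thesis unfolding a_def b_def by (simp add: card_cartesian_product)
  qed
  have "{(x, y). x \<in> S \<and> y \<in> S \<and> k x = k y \<and> x \<in> X \<and> y \<in> Y} = (\<Union>c\<in>k ` S. (K c \<inter> X) \<times> (K c \<inter> Y))"
    "{(x, y). x \<in> S \<and> y \<in> S \<and> k x = k y} = (\<Union>c\<in>k ` S. K c \<times> K c)"
    unfolding K_def by auto
  moreover have "card (\<Union>c\<in>k ` S. (K c \<inter> X) \<times> (K c \<inter> Y)) = (\<Sum>c\<in>k ` S. card ((K c \<inter> X) \<times> (K c \<inter> Y)))"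
    "card (\<Union>c\<in>k ` S. K c \<times> K c) = (\<Sum>c\<in>k ` S. card (K c \<times> K c))"
    using assms(1) fin by (intro card_UN_disjoint; auto simp: K_def)+
  moreover have "4 * (\<Sum>c\<in>k ` S. card ((K c \<inter> X) \<times> (K c \<inter> Y))) \<le> (\<Sum>c\<in>k ` S. card (K c \<times> K c))"
    unfolding sum_distrib_left using fibre by (rule sum_mono)
  ultimately show ?thesis by simp
qed

lemma points_eq_words: "{x. point_in n d x} = words {1..int n} d"
  unfolding point_in_def words_def by auto

lemma reading_code_endpoints:
  assumes "u \<in> canonical_codes (length w) d" "reads G w u" "i < length w" "2 * i \<noteq> length w - 1"
  obtains x y where "point_in (length w) d x" "point_in (length w) d y"
    and "pair_mask (length w) (int i + 1) x = pair_mask (length w) (int i + 1) y"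
    and "G x = w ! i" "G y = w ! (length w - 1 - i)"
    and "code_line (length w) u = line_through (length w) (int i + 1) x y"
proof -
  let ?n = "length w"
  have u: "u \<in> words (coord_alphabet ?n) d" "set u \<subseteq> coord_alphabet ?n"
    using assms(1) unfolding canonical_codes_def words_def by auto
  note through = code_line_eq_line_through[OF u(2) assms(3,4)]
  define r where "r = map (\<lambda>j. G (point_at u (int j))) [0..<?n]"
  have points: "point_in ?n d (point_at u (int i))" "point_in ?n d (point_at u (int (?n - 1 - i)))"
    using assms(3) by (intro point_in_point_at[OF u(1)]; simp)+
  have letters: "r ! i = G (point_at u (int i))" "r ! (?n - 1 - i) = G (point_at u (int (?n - 1 - i)))"
    unfolding r_def using assms(3) by auto
  have "r = w \<or> rev r = w" using assms(2) unfolding reads_def Let_def r_def .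
  then show thesis
  proof
    assume "r = w"
    then show thesis using that[OF points through(3) _ _ through(1)] letters by simp
  next
    assume "rev r = w"
    moreover have "length r = ?n" unfolding r_def by simp
    ultimately have "w ! i = r ! (?n - 1 - i)" "w ! (?n - 1 - i) = r ! i"
      using assms(3) by (auto simp: rev_nth)
    then show thesis using that[OF points(2,1) through(3)[symmetric] _ _ through(2)] letters by simp
  qed
qed

lemma mirror_position_ne:
  assumes "i < length w" "w ! i \<noteq> w ! (length w - 1 - i)"
  shows "2 * i \<noteq> length w - 1" "length w \<ge> 2"
proof -
  show "2 * i \<noteq> length w - 1"
  proof
    assume "2 * i = length w - 1"
    then have "length w - 1 - i = i" by arith
    with assms(2) show False by simp
  qed
  with assms(1) show "length w \<ge> 2" by arith
qed

lemma four_card_reading_codes_le: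
  assumes "i < length w" "w ! i \<noteq> w ! (length w - 1 - i)"
  shows "4 * card {u \<in> canonical_codes (length w) d. reads G w u} \<le> (length w + 2) ^ d"
proof -
  define n where "n = length w"
  define \<alpha> where "\<alpha> = int i + 1"
  have i: "i < n" "2 * i \<noteq> n - 1" "n \<ge> 2"
    using assms mirror_position_ne[OF assms] unfolding n_def by auto
  let ?codes = "{u \<in> canonical_codes n d. reads G w u}"
  define P where "P = {x. point_in n d x}"
  define X where "X = {x. G x = w ! i}"
  define Y where "Y = {x. G x = w ! (n - 1 - i)}"
  let ?cross = "{(x, y). x \<in> P \<and> y \<in> P \<and> pair_mask n \<alpha> x = pair_mask n \<alpha> y \<and> x \<in> X \<and> y \<in> Y}"
  have fin_P: "finite P"
    unfolding P_def points_eq_words by (rule finite_words) simp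
  then have fin_cross: "finite ?cross" by (intro finite_subset[of ?cross "P \<times> P"]) auto
  have lines: "code_line n ` ?codes \<subseteq> (\<lambda>(x, y). line_through n \<alpha> x y) ` ?cross"
  proof
    fix L assume "L \<in> code_line n ` ?codes"
    then obtain u where u: "u \<in> canonical_codes n d" "reads G w u" and L: "L = code_line n u" by blast
    from u i(1,2) obtain x y where "point_in n d x" "point_in n d y" "pair_mask n \<alpha> x = pair_mask n \<alpha> y"
      "G x = w ! i" "G y = w ! (n - 1 - i)" "code_line n u = line_through n \<alpha> x y"
      by (rule reading_code_endpoints[of u w d G i, folded n_def \<alpha>_def])
    then have "(x, y) \<in> ?cross" "L = (\<lambda>(x, y). line_through n \<alpha> x y) (x, y)"
      unfolding L P_def X_def Y_def by simp_all
    then show "L \<in> (\<lambda>(x, y). line_through n \<alpha> x y) ` ?cross" by (rule rev_image_eqI)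
  qed
  have "card (code_line n ` ?codes) \<le> card ((\<lambda>(x, y). line_through n \<alpha> x y) ` ?cross)"
    by (rule card_mono[OF finite_imageI[OF fin_cross] lines])
  also have "\<dots> \<le> card ?cross" by (rule card_image_le[OF fin_cross])
  moreover have "inj_on (code_line n) ?codes"
    using inj_on_code_line[OF i(3)] by (rule inj_on_subset) blast
  ultimately have "card ?codes \<le> card ?cross" by (simp add: card_image)
  also have "4 * card ?cross \<le> card {(x, y). x \<in> P \<and> y \<in> P \<and> pair_mask n \<alpha> x = pair_mask n \<alpha> y}"
    using fin_P assms(2) unfolding X_def Y_def n_def by (intro card_kernel_pairs_between_le) auto
  also have "\<dots> \<le> (n + 2) ^ d"
    using card_mask_pairs_le[of \<alpha> n d] i unfolding P_def \<alpha>_def by simp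
  finally show ?thesis unfolding n_def by simp
qed

lemma two_f_word_le:
  assumes "length w \<ge> 2"
  shows "2 * f_word w d \<le> (length w + 2) ^ d"
proof -
  obtain G where G: "f_word w d = f_grid w d G" using f_word_attained[OF assms] .
  have "finite (canonical_codes (length w) d)"
    unfolding canonical_codes_def by (simp add: finite_words finite_coord_alphabet)
  then have "f_grid w d G \<le> card (canonical_codes (length w) d)"
    unfolding f_grid_eq_card_codes[OF assms] by (rule card_mono) auto
  then show ?thesis using G two_card_canonical_codes_le[OF assms, of d] by linarith
qed

lemma four_f_word_le:
  assumes "length w \<ge> 2" "i < length w" "w ! i \<noteq> w ! (length w - 1 - i)"
  shows "4 * f_word w d \<le> (length w + 2) ^ d"
proof -
  obtain G where "f_word w d = f_grid w d G" using f_word_attained[OF assms(1)] .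
  then show ?thesis
    unfolding f_grid_eq_card_codes[OF assms(1)] using four_card_reading_codes_le[OF assms(2,3)] by simp
qed

definition const_pair :: "nat \<Rightarrow> int \<Rightarrow> (int \<times> int) set" where
  "const_pair n k = {(k, 0), (int n + 1 - k, 0)}"

definition test_sets :: "nat \<Rightarrow> (int \<times> int) set set" where
  "test_sets n = insert {(1, 1)} (insert {(int n, -1)} (const_pair n ` {1..int n}))"

definition balanced :: "nat \<Rightarrow> (int \<times> int) list \<Rightarrow> bool" where
  "balanced n u \<longleftrightarrow> (\<forall>B\<in>test_sets n. 8 * \<bar>deviation (coord_alphabet n) B u\<bar> < int (length u))"

lemma card_const_pair: "1 \<le> card (const_pair n k)" "card (const_pair n k) \<le> 2"
  unfolding const_pair_def by (simp_all add: card_insert_if)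

lemma test_sets_subset: "B \<in> test_sets n \<Longrightarrow> n \<ge> 1 \<Longrightarrow> B \<subseteq> coord_alphabet n"
  unfolding test_sets_def const_pair_def coord_alphabet_def by auto

lemma card_test_sets_le: "card (test_sets n) \<le> n + 2"
proof -
  have fin: "finite (const_pair n ` {1..int n})" by simp
  have "card (insert {(int n, -1)} (const_pair n ` {1..int n})) \<le> Suc (card (const_pair n ` {1..int n}))"
    using fin by (simp add: card_insert_if)
  moreover have "card (test_sets n) \<le> Suc (card (insert {(int n, -1)} (const_pair n ` {1..int n})))"
    unfolding test_sets_def using fin by (simp add: card_insert_if)
  moreover have "card (const_pair n ` {1..int n}) \<le> n"
    using card_image_le[of "{1..int n}" "const_pair n"] by simp
  ultimately show ?thesis by linarith
qed

lemma card_unbalanced_le: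
  assumes "n \<ge> 2"
  shows "card {u \<in> words (coord_alphabet n) d. \<not> balanced n u} * d \<le> 64 * (n + 2) ^ (d + 3)"
proof -
  let ?A = "coord_alphabet n"
  let ?bad = "\<lambda>B. {u \<in> words ?A d. int d \<le> 8 * \<bar>deviation ?A B u\<bar>}"
  have "{u \<in> words ?A d. \<not> balanced n u} \<subseteq> (\<Union>B\<in>test_sets n. ?bad B)"
    unfolding balanced_def words_def by auto
  then have "card {u \<in> words ?A d. \<not> balanced n u} \<le> card (\<Union>B\<in>test_sets n. ?bad B)"
    by (intro card_mono) (auto simp: test_sets_def finite_words finite_coord_alphabet)
  also have "\<dots> \<le> (\<Sum>B\<in>test_sets n. card (?bad B))"
    by (rule card_UN_le) (simp add: test_sets_def)
  finally have "card {u \<in> words ?A d. \<not> balanced n u} * d \<le> (\<Sum>B\<in>test_sets n. card (?bad B) * d)"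
    unfolding sum_distrib_right[symmetric] by (rule mult_right_mono) simp
  also have "\<dots> \<le> (\<Sum>B\<in>test_sets n. 64 * (n + 2) ^ (d + 2))"
  proof (rule sum_mono)
    fix B assume "B \<in> test_sets n"
    then show "card (?bad B) * d \<le> 64 * (n + 2) ^ (d + 2)"
      using card_words_deviating_le[OF finite_coord_alphabet test_sets_subset, of B n d] assms
      by (simp only: card_coord_alphabet[OF assms])
  qed
  also have "\<dots> \<le> (n + 2) * (64 * (n + 2) ^ (d + 2))"
    unfolding sum_constant of_nat_id using card_test_sets_le[of n] by (rule mult_right_mono) simp
  also have "\<dots> = 64 * (n + 2) ^ (d + 3)"
    by (simp only: power_add power3_eq_cube power2_eq_square ac_simps)
  finally show ?thesis .
qed

lemma balanced_map_reverse_coord: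
  assumes "balanced n u"
  shows "balanced n (map (reverse_coord n) u)"
  unfolding balanced_def
proof
  fix B assume B: "B \<in> test_sets n"
  have "reverse_coord n ` B \<in> test_sets n"
    using B unfolding test_sets_def const_pair_def reverse_coord_def by auto
  moreover have "card (reverse_coord n ` B) = card B"
    by (rule card_image) (metis inj_onI reverse_coord_reverse_coord)
  then have "deviation (coord_alphabet n) B (map (reverse_coord n) u)
      = deviation (coord_alphabet n) (reverse_coord n ` B) u"
    unfolding deviation_def occurrences_map_reverse_coord by simp
  ultimately show "8 * \<bar>deviation (coord_alphabet n) B (map (reverse_coord n) u)\<bar>
      < int (length (map (reverse_coord n) u))"
    using assms unfolding balanced_def by simp
qed

text \<open>Positions on a line are counted from 0 by point_at but decoded as 1, ..., n. The point at
  position i of a balanced line has about 4d/(n+2) coordinates (3d/(n+2) at the middle position)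
  at level min (i + 1) (n - i), but fewer than 17d/(8(n+2)) at each lower level, whence the
  threshold 19d/(8(n+2)). Its low count is c plus the number of increasing coordinates on the
  first half of the line and c plus the number of decreasing ones on the second half, where c
  counts the low constant coordinates.\<close>

definition level_count :: "nat \<Rightarrow> int \<Rightarrow> int list \<Rightarrow> nat" where
  "level_count n k x = length (filter (\<lambda>c. c = k \<or> c = int n + 1 - k) x)"

definition decoded_level :: "nat \<Rightarrow> int list \<Rightarrow> nat" where
  "decoded_level n x =
    (LEAST k. 1 \<le> k \<and> 19 * int (length x) \<le> 8 * int (n + 2) * int (level_count n (int k) x))"

definition low_count :: "nat \<Rightarrow> int list \<Rightarrow> nat" where
  "low_count n x = length (filter (\<lambda>c. 2 * c < int n + 1) x)"

definition decoded_position :: "nat \<Rightarrow> int list \<Rightarrow> nat" where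
  "decoded_position n x =
    (if even (low_count n x) then decoded_level n x else n + 1 - decoded_level n x)"

definition decoding_grid :: "'a list \<Rightarrow> int list \<Rightarrow> 'a" where
  "decoding_grid w x = w ! (decoded_position (length w) x - 1)"

lemma length_filter_point_at:
  assumes "set u \<subseteq> coord_alphabet n"
  shows "length (filter P (point_at u (int i))) = length (filter (\<lambda>z. snd z = 0 \<and> P (fst z)) u)
    + (if P (1 + int i) then occurrences {(1, 1)} u else 0)
    + (if P (int n - int i) then occurrences {(int n, -1)} u else 0)"
  using assms
proof (induction u)
  case (Cons z u)
  then have "z \<in> coord_alphabet n" by simp
  then show ?case using Cons by (cases rule: coord_alphabetE) auto
qed (simp add: point_at_def)

lemma balanced_occurrences:
  assumes "balanced n u" "n \<ge> 2" "B \<in> test_sets n"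
  shows "int (length u) * (8 * int (card B) - 1) < 8 * int (n + 2) * int (occurrences B u)"
    and "8 * int (n + 2) * int (occurrences B u) < int (length u) * (8 * int (card B) + 1)"
proof -
  define X where "X = int (n + 2) * int (occurrences B u)"
  define Y where "Y = int (length u) * int (card B)"
  have "8 * \<bar>X - Y\<bar> < int (length u)"
    using assms unfolding balanced_def deviation_def card_coord_alphabet[OF assms(2)] X_def Y_def by blast
  then have "- int (length u) < 8 * (X - Y)" "8 * (X - Y) < int (length u)"
    by (cases "X - Y \<ge> 0"; simp)+
  moreover have "int (length u) * (8 * int (card B) - 1) = 8 * Y - int (length u)"
    "int (length u) * (8 * int (card B) + 1) = 8 * Y + int (length u)"
    "8 * int (n + 2) * int (occurrences B u) = 8 * X"
    unfolding X_def Y_def by (simp_all add: algebra_simps)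
  ultimately show "int (length u) * (8 * int (card B) - 1) < 8 * int (n + 2) * int (occurrences B u)"
    and "8 * int (n + 2) * int (occurrences B u) < int (length u) * (8 * int (card B) + 1)"
    by (simp_all only:) (simp_all add: algebra_simps)
qed

lemma level_count_point_at:
  assumes "set u \<subseteq> coord_alphabet n"
  shows "level_count n k (point_at u (int i)) = occurrences (const_pair n k) u
    + (if k = 1 + int i \<or> k = int n - int i
       then occurrences {(1, 1)} u + occurrences {(int n, -1)} u else 0)"
proof -
  have "filter (\<lambda>z. snd z = 0 \<and> (fst z = k \<or> fst z = int n + 1 - k)) u = filter (\<lambda>z. z \<in> const_pair n k) u"
    by (rule filter_cong) (auto simp: const_pair_def)
  then show ?thesis
    unfolding level_count_def length_filter_point_at[OF assms] occurrences_def by auto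
qed

lemma test_sets_members:
  "{(1, 1)} \<in> test_sets n" "{(int n, -1)} \<in> test_sets n"
  "1 \<le> k \<Longrightarrow> k \<le> int n \<Longrightarrow> const_pair n k \<in> test_sets n"
  unfolding test_sets_def by auto

lemma level_count_at_position:
  assumes "n \<ge> 2" "u \<in> words (coord_alphabet n) d" "balanced n u" "i < n"
  shows "19 * int d
    \<le> 8 * int (n + 2) * int (level_count n (int (min (i + 1) (n - i))) (point_at u (int i)))"
proof -
  define \<mu> where "\<mu> = min (i + 1) (n - i)"
  have A: "set u \<subseteq> coord_alphabet n" and len: "length u = d" using assms(2) unfolding words_def by auto
  have \<mu>: "1 \<le> int \<mu>" "int \<mu> \<le> int n" "int \<mu> = 1 + int i \<or> int \<mu> = int n - int i"
    unfolding \<mu>_def using assms(4) by auto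
  note bal = balanced_occurrences(1)[OF assms(3,1), unfolded len]
  have "int d * 7 \<le> int d * (8 * int (card (const_pair n (int \<mu>))) - 1)"
    using card_const_pair(1)[of n "int \<mu>"] by (intro mult_left_mono) auto
  then have "7 * int d < 8 * int (n + 2) * int (occurrences (const_pair n (int \<mu>)) u)"
    using bal[OF test_sets_members(3)[OF \<mu>(1,2)]] by linarith
  moreover have "7 * int d < 8 * int (n + 2) * int (occurrences {(1, 1)} u)"
    "7 * int d < 8 * int (n + 2) * int (occurrences {(int n, -1)} u)"
    using bal[OF test_sets_members(1)] bal[OF test_sets_members(2)] by simp_all
  ultimately show ?thesis
    using \<mu>(3) unfolding level_count_point_at[OF A] \<mu>_def[symmetric] by (auto simp: distrib_left)
qed

lemma level_count_below_position:
  assumes "n \<ge> 2" "u \<in> words (coord_alphabet n) d" "balanced n u" "d > 0"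
    and "1 \<le> k" "k < min (i + 1) (n - i)"
  shows "8 * int (n + 2) * int (level_count n (int k) (point_at u (int i))) < 19 * int d"
proof -
  have A: "set u \<subseteq> coord_alphabet n" and len: "length u = d" using assms(2) unfolding words_def by auto
  have "int d * (8 * int (card (const_pair n (int k))) + 1) \<le> int d * 17"
    using card_const_pair(2)[of n "int k"] by (intro mult_left_mono) auto
  moreover have "const_pair n (int k) \<in> test_sets n"
    using assms(5,6) by (intro test_sets_members(3)) auto
  ultimately have "8 * int (n + 2) * int (occurrences (const_pair n (int k)) u) < 17 * int d"
    using balanced_occurrences(2)[OF assms(3,1), unfolded len] by fastforce
  then show ?thesis
    using assms(4-6) unfolding level_count_point_at[OF A] by auto
qed

lemma decoded_level_point_at:
  assumes "n \<ge> 2" "u \<in> words (coord_alphabet n) d" "balanced n u" "is_moving u" "i < n"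
  shows "decoded_level n (point_at u (int i)) = min (i + 1) (n - i)"
  unfolding decoded_level_def
proof (rule Least_equality)
  have len: "length (point_at u (int i)) = d" using assms(2) unfolding words_def by simp
  then have "d > 0" using assms(4) unfolding is_moving_def by (cases u) auto
  show "1 \<le> min (i + 1) (n - i) \<and> 19 * int (length (point_at u (int i)))
      \<le> 8 * int (n + 2) * int (level_count n (int (min (i + 1) (n - i))) (point_at u (int i)))"
    using level_count_at_position[OF assms(1-3,5)] assms(5) unfolding len by simp
  fix k assume k: "1 \<le> k \<and> 19 * int (length (point_at u (int i)))
    \<le> 8 * int (n + 2) * int (level_count n (int k) (point_at u (int i)))"
  show "min (i + 1) (n - i) \<le> k"
  proof (rule ccontr)
    assume "\<not> min (i + 1) (n - i) \<le> k"
    then have "k < min (i + 1) (n - i)" by (rule not_le_imp_less)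
    then have "8 * int (n + 2) * int (level_count n (int k) (point_at u (int i))) < 19 * int d"
      using k by (intro level_count_below_position[OF assms(1-3) \<open>d > 0\<close>]) auto
    then show False using k unfolding len by simp
  qed
qed

lemma decoded_position_point_at:
  assumes "n \<ge> 2" "u \<in> words (coord_alphabet n) d" "balanced n u" "is_moving u" "i < n"
  defines "c \<equiv> length (filter (\<lambda>z. snd z = 0 \<and> 2 * fst z < int n + 1) u)"
  shows "decoded_position n (point_at u (int i)) = (if 2 * i + 1 < n then
      (if even (c + occurrences {(1, 1)} u) then i + 1 else n - i)
    else if n < 2 * i + 1 then
      (if even (c + occurrences {(int n, -1)} u) then n - i else i + 1)
    else i + 1)"
proof -
  have A: "set u \<subseteq> coord_alphabet n" using assms(2) unfolding words_def by auto
  have low: "low_count n (point_at u (int i)) = c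
    + (if 2 * i + 1 < n then occurrences {(1, 1)} u else 0)
    + (if n < 2 * i + 1 then occurrences {(int n, -1)} u else 0)"
    unfolding low_count_def length_filter_point_at[OF A] c_def by (simp add: algebra_simps)
  have level: "decoded_level n (point_at u (int i)) = min (i + 1) (n - i)"
    by (rule decoded_level_point_at[OF assms(1-5)])
  consider "2 * i + 1 < n" | "n < 2 * i + 1" | "2 * i + 1 = n" by linarith
  then show ?thesis
  proof cases
    case 1
    then have "min (i + 1) (n - i) = i + 1" "n + 1 - (i + 1) = n - i" by auto
    then show ?thesis unfolding decoded_position_def low level using 1 by simp
  next
    case 2
    then have "min (i + 1) (n - i) = n - i" "n + 1 - (n - i) = i + 1" using assms(5) by auto
    then show ?thesis unfolding decoded_position_def low level using 2 by simp
  next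
    case 3
    then have "min (i + 1) (n - i) = i + 1" "n + 1 - (i + 1) = i + 1" by auto
    then show ?thesis unfolding decoded_position_def low level using 3 by simp
  qed
qed

lemma occurrences_moving_letters:
  fixes u :: "(int \<times> int) list"
  shows "occurrences {(1, 1), (int n, -1)} u = occurrences {(1, 1)} u + occurrences {(int n, -1)} u"
proof -
  have "occurrences {(1, 1), (int n, -1)} u = occurrences ({(1, 1)} \<union> {(int n, -1)}) u"
    by (rule arg_cong[where f = "\<lambda>B. occurrences B u"]) auto
  also have "\<dots> = occurrences {(1, 1)} u + occurrences {(int n, -1)} u"
    by (rule occurrences_Un) simp
  finally show ?thesis .
qed

lemma reads_decoding_grid:
  assumes "length w \<ge> 2" "u \<in> words (coord_alphabet (length w)) d" "balanced (length w) u" "is_moving u"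
    and "(\<forall>i<length w. w ! i = w ! (length w - 1 - i)) \<or> odd (occurrences {(1, 1), (int (length w), -1)} u)"
  shows "reads (decoding_grid w) w u"
proof -
  define n where "n = length w"
  define c where "c = length (filter (\<lambda>z. snd z = 0 \<and> 2 * fst z < int n + 1) u)"
  define s where "s = occurrences {(1, 1)} u"
  define t where "t = occurrences {(int n, -1)} u"
  define r where "r = map (\<lambda>i. decoding_grid w (point_at u (int i))) [0..<n]"
  define pos where "pos i = decoded_position n (point_at u (int i))" for i
  have len: "length r = length w" unfolding r_def n_def by simp
  have r: "r ! i = w ! (pos i - 1)" if "i < n" for i
    using that unfolding r_def decoding_grid_def n_def pos_def by simp
  have pos: "pos i = (if 2 * i + 1 < n then (if even (c + s) then i + 1 else n - i)
      else if n < 2 * i + 1 then (if even (c + t) then n - i else i + 1) else i + 1)" if "i < n" for i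
    unfolding pos_def c_def s_def t_def n_def
    by (rule decoded_position_point_at[OF assms(1-4) that[unfolded n_def]])
  have "(\<forall>i<n. w ! i = w ! (n - 1 - i)) \<or> odd (s + t)"
    using assms(5) occurrences_moving_letters[of n u] unfolding n_def s_def t_def by simp
  then consider "even (c + s)" "odd (c + t)" | "odd (c + s)" "even (c + t)"
    | "\<forall>i<n. w ! i = w ! (n - 1 - i)"
    by auto
  then have "r = w \<or> r = rev w"
  proof cases
    case 1
    then have "pos i = i + 1" if "i < n" for i using pos[OF that] by simp
    then have "r = w" using r len unfolding n_def by (intro nth_equalityI) simp_all
    then show ?thesis ..
  next
    case 2
    then have "pos i - 1 = n - 1 - i" if "i < n" for i using pos[OF that] that by auto
    then have "r = rev w" using r len unfolding n_def by (intro nth_equalityI) (simp_all add: rev_nth)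
    then show ?thesis ..
  next
    case 3
    have "pos i - 1 = i \<or> pos i - 1 = n - 1 - i" if "i < n" for i using pos[OF that] that by auto
    then have "r ! i = w ! i" if "i < n" for i using r[OF that] 3 that by (metis (no_types, lifting))
    then have "r = w" using len unfolding n_def by (intro nth_equalityI) simp_all
    then show ?thesis ..
  qed
  then show ?thesis unfolding reads_def r_def n_def Let_def by auto
qed

lemma f_word_lower_bound:
  assumes "length w \<ge> 2"
    and "\<And>u. Q u \<Longrightarrow> Q (map (reverse_coord (length w)) u)" "\<And>u. Q u \<Longrightarrow> is_moving u"
    and "\<And>u. Q u \<Longrightarrow> (\<forall>i<length w. w ! i = w ! (length w - 1 - i))
      \<or> odd (occurrences {(1, 1), (int (length w), -1)} u)"
  shows "card {u \<in> words (coord_alphabet (length w)) d. Q u}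
    \<le> 2 * f_word w d + card {u \<in> words (coord_alphabet (length w)) d. \<not> balanced (length w) u}"
proof -
  define n where "n = length w"
  let ?W = "words (coord_alphabet n) d"
  define U where "U = {u \<in> ?W. balanced n u \<and> Q u}"
  have "2 * card {u \<in> U. is_canonical u} = card U"
  proof (rule two_card_canonical)
    show "U \<subseteq> ?W" unfolding U_def by blast
    show "map (reverse_coord n) u \<in> U" if "u \<in> U" for u
      using that assms(2) map_reverse_coord_words balanced_map_reverse_coord
      unfolding U_def n_def by blast
    show "is_moving u" if "u \<in> U" for u using that assms(3) unfolding U_def by blast
  qed
  moreover have "{u \<in> U. is_canonical u} \<subseteq> {u \<in> canonical_codes n d. reads (decoding_grid w) w u}"
    using reads_decoding_grid[OF assms(1)] assms(3,4)
    unfolding U_def canonical_codes_def n_def by blast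
  then have "card {u \<in> U. is_canonical u} \<le> f_grid w d (decoding_grid w)"
    unfolding f_grid_eq_card_codes[OF assms(1)] n_def[symmetric]
    by (intro card_mono) (simp_all add: canonical_codes_def finite_words finite_coord_alphabet)
  moreover have "card {u \<in> ?W. Q u} \<le> card U + card {u \<in> ?W. \<not> balanced n u}"
  proof -
    have "{u \<in> ?W. Q u} \<subseteq> U \<union> {u \<in> ?W. \<not> balanced n u}" unfolding U_def by blast
    then have "card {u \<in> ?W. Q u} \<le> card (U \<union> {u \<in> ?W. \<not> balanced n u})"
      by (intro card_mono) (simp_all add: U_def finite_words finite_coord_alphabet)
    then show ?thesis using card_Un_le order_trans by blast
  qed
  ultimately show ?thesis
    using f_grid_le_f_word[OF assms(1), of d "decoding_grid w"] unfolding n_def by linarith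
qed

lemma card_moving_codes:
  assumes "n \<ge> 2"
  shows "card {u \<in> words (coord_alphabet n) d. is_moving u} = (n + 2) ^ d - n ^ d"
proof -
  let ?C = "(\<lambda>c. (c, 0::int)) ` {1..int n}"
  have const: "snd z = 0 \<longleftrightarrow> z \<in> ?C" if "z \<in> coord_alphabet n" for z
    using that unfolding coord_alphabet_def by auto
  have "is_moving u \<longleftrightarrow> \<not> set u \<subseteq> ?C" if "u \<in> words (coord_alphabet n) d" for u
    using that const unfolding is_moving_def words_def by blast
  then have "{u \<in> words (coord_alphabet n) d. is_moving u} = {u \<in> words (coord_alphabet n) d. \<not> set u \<subseteq> ?C}"
    by blast
  moreover have "card ?C = n" by (subst card_image) (auto simp: inj_on_def)
  moreover have "?C \<subseteq> coord_alphabet n" unfolding coord_alphabet_def by blast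
  ultimately show ?thesis
    using card_words_not_subset[OF finite_coord_alphabet, of ?C n d] card_coord_alphabet[OF assms] by simp
qed

lemma card_odd_moving_codes:
  assumes "n \<ge> 2"
  shows "2 * int (card {u \<in> words (coord_alphabet n) d. odd (occurrences {(1, 1), (int n, -1)} u)})
    = int (n + 2) ^ d - (int n - 2) ^ d"
proof -
  have "{(1, 1), (int n, -1)} \<subseteq> coord_alphabet n" "card {(1::int, 1::int), (int n, -1)} = 2"
    using assms unfolding coord_alphabet_def by auto
  then show ?thesis
    using card_words_odd_occurrences[OF finite_coord_alphabet, of "{(1, 1), (int n, -1)}" n d]
      card_coord_alphabet[OF assms] by simp
qed

lemma normalized_limit_squeeze:
  fixes a :: "nat \<Rightarrow> real" and c M r K :: real
  assumes "c > 0" "\<bar>r\<bar> < M"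
    and upper: "\<And>d. d \<ge> 1 \<Longrightarrow> c * a d \<le> M ^ d"
    and lower: "\<And>d. d \<ge> 1 \<Longrightarrow> M ^ d - r ^ d - K * M ^ d / real d \<le> c * a d"
  shows "(\<lambda>d. a d / ((1 / c) * M ^ d)) \<longlonglongrightarrow> 1"
proof (rule tendsto_sandwich[of "\<lambda>d. 1 - (r / M) ^ d - K / real d" _ _ "\<lambda>_. 1"])
  have M: "M > 0" using assms(2) by linarith
  have ratio: "a d / ((1 / c) * M ^ d) = c * a d / M ^ d" for d
    using M assms(1) by (simp add: field_simps)
  have "1 - (r / M) ^ d - K / real d \<le> a d / ((1 / c) * M ^ d)" if "d \<ge> 1" for d
  proof -
    have "(1 - (r / M) ^ d - K / real d) * M ^ d = M ^ d - r ^ d - K * M ^ d / real d"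
      using M by (simp add: field_simps power_divide)
    then show ?thesis
      unfolding ratio using lower[OF that] M by (simp add: le_divide_eq)
  qed
  then show "\<forall>\<^sub>F d in sequentially. 1 - (r / M) ^ d - K / real d \<le> a d / ((1 / c) * M ^ d)"
    unfolding eventually_sequentially by blast
  have "a d / ((1 / c) * M ^ d) \<le> 1" if "d \<ge> 1" for d
    unfolding ratio using upper[OF that] M by (simp add: divide_le_eq)
  then show "\<forall>\<^sub>F d in sequentially. a d / ((1 / c) * M ^ d) \<le> 1"
    unfolding eventually_sequentially by blast
  have "\<bar>r / M\<bar> = \<bar>r\<bar> / M" using M by (simp add: abs_divide)
  also have "\<dots> < 1" using assms(2) M by simp
  finally have "\<bar>r / M\<bar> < 1" .
  then have "(\<lambda>d. 1 - (r / M) ^ d - K / real d) \<longlonglongrightarrow> 1 - 0 - 0"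
    by (intro tendsto_diff tendsto_const LIMSEQ_power_zero lim_const_over_n) simp
  then show "(\<lambda>d. 1 - (r / M) ^ d - K / real d) \<longlonglongrightarrow> 1" by simp
qed simp

lemma f_word_ge_palindrome:
  assumes "length w \<ge> 2" "\<forall>i<length w. w ! i = w ! (length w - 1 - i)"
  shows "(length w + 2) ^ d - length w ^ d
    \<le> 2 * f_word w d + card {u \<in> words (coord_alphabet (length w)) d. \<not> balanced (length w) u}"
  unfolding card_moving_codes[OF assms(1), symmetric]
proof (rule f_word_lower_bound[OF assms(1), where Q = is_moving])
  show "is_moving (map (reverse_coord (length w)) u)" if "is_moving u" for u using that by simp
  show "(\<forall>i<length w. w ! i = w ! (length w - 1 - i))
    \<or> odd (occurrences {(1, 1), (int (length w), -1)} u)" for u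
    using assms(2) ..
qed

lemma f_word_ge_odd_moving:
  assumes "length w \<ge> 2"
  shows "int (length w + 2) ^ d - (int (length w) - 2) ^ d
    \<le> 4 * int (f_word w d)
      + 2 * int (card {u \<in> words (coord_alphabet (length w)) d. \<not> balanced (length w) u})"
proof -
  let ?Q = "\<lambda>u. odd (occurrences {(1, 1), (int (length w), -1)} u)"
  have "is_moving u" if "?Q u" for u
  proof (rule ccontr)
    assume "\<not> is_moving u"
    then have "occurrences {(1, 1), (int (length w), -1)} u = 0"
      unfolding is_moving_def occurrences_def by (auto simp: filter_empty_conv)
    then show False using that by simp
  qed
  moreover have "?Q (map (reverse_coord (length w)) u)" if "?Q u" for u
    using that unfolding occurrences_map_reverse_coord by (simp add: reverse_coord_def insert_commute)
  ultimately have "card {u \<in> words (coord_alphabet (length w)) d. ?Q u}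
      \<le> 2 * f_word w d + card {u \<in> words (coord_alphabet (length w)) d. \<not> balanced (length w) u}"
    by (intro f_word_lower_bound[OF assms(1)]) auto
  then show ?thesis using card_odd_moving_codes[OF assms(1), of d] by linarith
qed

lemma card_unbalanced_le_real:
  assumes "n \<ge> 2" "d \<ge> 1"
  shows "real (card {u \<in> words (coord_alphabet n) d. \<not> balanced n u})
    \<le> 64 * (real n + 2) ^ 3 * (real n + 2) ^ d / real d"
proof -
  have "real (card {u \<in> words (coord_alphabet n) d. \<not> balanced n u} * d) \<le> real (64 * (n + 2) ^ (d + 3))"
    using card_unbalanced_le[OF assms(1)] by (simp only: of_nat_le_iff)
  then show ?thesis
    using assms(2) by (simp add: le_divide_eq power_add algebra_simps)
qed

lemma f_word_limit_palindrome:
  assumes "length w \<ge> 2" "\<forall>i<length w. w ! i = w ! (length w - 1 - i)"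
  shows "(\<lambda>d. real (f_word w d) / ((1/2) * (real (length w) + 2) ^ d)) \<longlonglongrightarrow> 1"
proof (rule normalized_limit_squeeze
    [where r = "real (length w)" and K = "64 * (real (length w) + 2) ^ 3"])
  fix d :: nat assume "d \<ge> 1"
  have "real (2 * f_word w d) \<le> real ((length w + 2) ^ d)"
    using two_f_word_le[OF assms(1)] by (simp only: of_nat_le_iff)
  then show "2 * real (f_word w d) \<le> (real (length w) + 2) ^ d" by (simp add: add.commute)
  have "real ((length w + 2) ^ d - length w ^ d)
      \<le> real (2 * f_word w d + card {u \<in> words (coord_alphabet (length w)) d. \<not> balanced (length w) u})"
    using f_word_ge_palindrome[OF assms] by (simp only: of_nat_le_iff)
  moreover have "length w ^ d \<le> (length w + 2) ^ d" by (simp add: power_mono)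
  ultimately show "(real (length w) + 2) ^ d - real (length w) ^ d
      - 64 * (real (length w) + 2) ^ 3 * (real (length w) + 2) ^ d / real d \<le> 2 * real (f_word w d)"
    using card_unbalanced_le_real[OF assms(1) \<open>d \<ge> 1\<close>] by (simp add: of_nat_diff add.commute)
qed simp_all

lemma f_word_limit_non_palindrome:
  assumes "length w \<ge> 2" "i < length w" "w ! i \<noteq> w ! (length w - 1 - i)"
  shows "(\<lambda>d. real (f_word w d) / ((1/4) * (real (length w) + 2) ^ d)) \<longlonglongrightarrow> 1"
proof (rule normalized_limit_squeeze
    [where r = "real (length w) - 2" and K = "128 * (real (length w) + 2) ^ 3"])
  fix d :: nat assume "d \<ge> 1"
  have "real (4 * f_word w d) \<le> real ((length w + 2) ^ d)"
    using four_f_word_le[OF assms] by (simp only: of_nat_le_iff)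
  then show "4 * real (f_word w d) \<le> (real (length w) + 2) ^ d" by (simp add: add.commute)
  have "real_of_int (int (length w + 2) ^ d - (int (length w) - 2) ^ d)
      \<le> real_of_int (4 * int (f_word w d)
        + 2 * int (card {u \<in> words (coord_alphabet (length w)) d. \<not> balanced (length w) u}))"
    using f_word_ge_odd_moving[OF assms(1)] by (simp only: of_int_le_iff)
  then show "(real (length w) + 2) ^ d - (real (length w) - 2) ^ d
      - 128 * (real (length w) + 2) ^ 3 * (real (length w) + 2) ^ d / real d \<le> 4 * real (f_word w d)"
    using card_unbalanced_le_real[OF assms(1) \<open>d \<ge> 1\<close>] by (simp add: add.commute)
qed (use assms(1) in simp_all)

theorem theorem6:
  fixes w :: "'a list"
  assumes "length w \<ge> 2"
  shows "((\<forall>i<length w. w ! i = w ! (length w - 1 - i)) \<longrightarrow>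
            (\<lambda>d. real (f_word w d) / ((1/2) * (real (length w) + 2) ^ d)) \<longlonglongrightarrow> 1)
       \<and> (\<not> (\<forall>i<length w. w ! i = w ! (length w - 1 - i)) \<longrightarrow>
            (\<lambda>d. real (f_word w d) / ((1/4) * (real (length w) + 2) ^ d)) \<longlonglongrightarrow> 1)"
  using f_word_limit_palindrome[OF assms] f_word_limit_non_palindrome[OF assms] by blast

end
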